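(* Suppose all issues are binary and there is a single order $\mathcal O$ of the issues such that every agent's preference ranking is $\mathcal O$-legal. Then local dominance improvement dynamics converge: from any initial vote profile, every sequence of LDI steps is finite. This holds for any scheduler and for any nonnegative uncertainty parameters of the agents, which may vary between rounds.
   Context: Issues $\mathcal P=\{1,\dots,p\}$ with candidate sets $D_i$; binary means $D_i=\{0,1\}$ for all $i$. There are $n$ agents with strict rankings $\succ_j$ over $\mathcal D=\prod_iD_i$, and vote profiles $a\in\mathcal D^n$. Score tuples and outcomes: - For a score tuple $v$ (vectors $v^i\in\mathbb N^{D_i}$), the plurality outcome $f(v)$ picks on each issue the top-scoring candidate, with ties broken lexicographically. - $v+b$ adds one vote for $b^i$ on each issue $i$. - $s_{-j}(a)$ is the score tuple of $a$ without agent $j$. Uncertainty: per issue, a candidate-wise distance $\delta(s,\tilde s)=\max_c\hat\delta(s(c),\tilde s(c))$ with $\hat\delta$ monotone (e.g. $\ell_\infty$). With parameters $r_j$, $$\tilde S_{-j}(a;r_j)=\prod_i\{v^i:\delta(v^i,s^i_{-j}(a))\le r^i_j\}.$$ Local dominance: $\hat a_j$ $S$-beats $a_j$ if some $v\in S$ has $f(v+\hat a_j)\succ_j f(v+a_j)$. It $S$-dominates $a_j$ if it $S$-beats $a_j$ and $a_j$ does not $S$-beat it. An LDI step of agent $j$ on issue $i$ at $a$ (with $S=\tilde S_{-j}(a;r_j)$, $r_j$ being $j$'s current parameters) is a change to a vote that $S$-dominates $a_j$, differs from $a_j$ only on issue $i$, and is not $S$-dominated by another vote differing from $a_j$ only on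 issue $i$. Dynamics: at each round a scheduler picks an agent and an issue on which that agent has an LDI step, and the agent makes that step. $\mathcal O$-legality: for an order $\mathcal O=(o_1,\dots,o_p)$ of the issues, a ranking is $\mathcal O$-legal if, for each $i$, its relative ordering of the candidates of issue $o_i$ (holding all other issues fixed) depends only on the values of issues $o_1,\dots,o_{i-1}$, and not on the values of $o_{i+1},\dots,o_p$. *)

theory Defs
  imports Complex_Main
begin

text \<open>Binary issues: issues are the elements of a finite type 'i, each with
candidate set bool (False = 0, True = 1).\<close>

type_synonym 'i outcome = "'i \<Rightarrow> bool"
type_synonym 'i scores = "'i \<Rightarrow> bool \<Rightarrow> nat"

text \<open>Strict ranking: R x y means x is strictly preferred to y.\<close>
definition strict_ranking :: "('x \<Rightarrow> 'x \<Rightarrow> bool) \<Rightarrow> bool" where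
  "strict_ranking R \<longleftrightarrow> (\<forall>x. \<not> R x x) \<and> (\<forall>x y z. R x y \<longrightarrow> R y z \<longrightarrow> R x z)
     \<and> (\<forall>x y. x \<noteq> y \<longrightarrow> R x y \<or> R y x)"

text \<open>Plurality outcome; ties broken lexicographically, i.e. in favour of 0 = False.\<close>
definition plurality :: "'i scores \<Rightarrow> 'i outcome" where
  "plurality v i = (v i False < v i True)"

definition add_vote :: "'i scores \<Rightarrow> 'i outcome \<Rightarrow> 'i scores" where
  "add_vote v b i c = v i c + (if b i = c then 1 else 0)"

definition scores_minus :: "('a::finite \<Rightarrow> 'i outcome) \<Rightarrow> 'a \<Rightarrow> 'i scores" where
  "scores_minus a j i c = card {k. k \<noteq> j \<and> a k i = c}"

definition issue_dist :: "(nat \<Rightarrow> nat \<Rightarrow> real) \<Rightarrow> (bool \<Rightarrow> nat) \<Rightarrow> (bool \<Rightarrow> nat) \<Rightarrow> real" where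
  "issue_dist dh s t = Max (range (\<lambda>c. dh (s c) (t c)))"

definition monotone_dist :: "(nat \<Rightarrow> nat \<Rightarrow> real) \<Rightarrow> bool" where
  "monotone_dist dh \<longleftrightarrow> (\<forall>x. dh x x = 0) \<and> (\<forall>x y. 0 \<le> dh x y) \<and>
     (\<forall>x y z. x \<le> y \<longrightarrow> y \<le> z \<longrightarrow> dh x y \<le> dh x z \<and> dh z y \<le> dh z x)"

definition unc_set :: "(nat \<Rightarrow> nat \<Rightarrow> real) \<Rightarrow> ('a::finite \<Rightarrow> 'i outcome) \<Rightarrow> 'a \<Rightarrow> ('i \<Rightarrow> real) \<Rightarrow> 'i scores set" where
  "unc_set dh a j r = {v. \<forall>i. issue_dist dh (v i) (scores_minus a j i) \<le> r i}"

definition S_beats :: "('i outcome \<Rightarrow> 'i outcome \<Rightarrow> bool) \<Rightarrow> 'i scores set \<Rightarrow> 'i outcome \<Rightarrow> 'i outcome \<Rightarrow> bool" where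
  "S_beats R S b' b \<longleftrightarrow> (\<exists>v\<in>S. R (plurality (add_vote v b')) (plurality (add_vote v b)))"

definition S_dominates :: "('i outcome \<Rightarrow> 'i outcome \<Rightarrow> bool) \<Rightarrow> 'i scores set \<Rightarrow> 'i outcome \<Rightarrow> 'i outcome \<Rightarrow> bool" where
  "S_dominates R S b' b \<longleftrightarrow> S_beats R S b' b \<and> \<not> S_beats R S b b'"

definition LDI_step :: "(nat \<Rightarrow> nat \<Rightarrow> real) \<Rightarrow> ('i outcome \<Rightarrow> 'i outcome \<Rightarrow> bool) \<Rightarrow>
    ('a::finite \<Rightarrow> 'i outcome) \<Rightarrow> 'a \<Rightarrow> ('i \<Rightarrow> real) \<Rightarrow> 'i \<Rightarrow> 'i outcome \<Rightarrow> bool" where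
  "LDI_step dh R a j r i b' \<longleftrightarrow>
     (let S = unc_set dh a j r in
        S_dominates R S b' (a j) \<and> (\<forall>k. k \<noteq> i \<longrightarrow> b' k = a j k) \<and>
        \<not> (\<exists>b''. (\<forall>k. k \<noteq> i \<longrightarrow> b'' k = a j k) \<and> S_dominates R S b'' b'))"

definition issue_order :: "'i list \<Rightarrow> bool" where
  "issue_order os \<longleftrightarrow> distinct os \<and> set os = UNIV"

definition legal :: "'i list \<Rightarrow> ('i outcome \<Rightarrow> 'i outcome \<Rightarrow> bool) \<Rightarrow> bool" where
  "legal os R \<longleftrightarrow> (\<forall>k < length os. \<forall>x y. (\<forall>m < k. x (os ! m) = y (os ! m)) \<longrightarrow>
      (\<forall>c d. R (x(os ! k := c)) (x(os ! k := d)) \<longleftrightarrow> R (y(os ! k := c)) (y(os ! k := d))))"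

end

theory Submission
  imports Defs
begin

text \<open>An LDI step on issue i is always a move towards agent j's preferred value
on i, given the current outcome on all other issues: the uncertainty set contains the
true scores on every other issue (the radii are nonnegative), so a witness of the step can be
patched into one that sees the actual outcome elsewhere.  Now follow the issue order.  Once no
more steps occur on the first k issues, their outcome is frozen, and by legality every
agent has a fixed preferred value on the next issue.  Each step on that issue moves one agent
to this value, so the number of agents not voting for it strictly decreases and the issue
eventually falls silent as well.  After all issues have fallen silent no step is possible.\<close>

definition profile_outcome :: "('a::finite \<Rightarrow> 'i outcome) \<Rightarrow> 'i outcome" where
  "profile_outcome a = plurality (\<lambda>i c. card {k. a k i = c})"

definition local_improvement ::
    "('i outcome \<Rightarrow> 'i outcome \<Rightarrow> bool) \<Rightarrow> ('a::finite \<Rightarrow> 'i outcome) \<Rightarrow> 'a \<Rightarrow> 'i \<Rightarrow> 'i outcome \<Rightarrow> bool" where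
  "local_improvement R a j i b \<longleftrightarrow>
     b i \<noteq> a j i \<and> (\<forall>k. k \<noteq> i \<longrightarrow> b k = a j k) \<and>
     R ((profile_outcome a)(i := b i)) ((profile_outcome a)(i := \<not> b i))"

lemma profile_outcome_cong:
  assumes "\<And>j. a j i = a' j i"
  shows "profile_outcome a i = profile_outcome a' i"
  using assms unfolding profile_outcome_def plurality_def by simp

lemma add_vote_scores_minus: "add_vote (scores_minus a j) (a j) = (\<lambda>i c. card {k. a k i = c})"
proof (intro ext)
  fix i c
  have "{k. a k i = c} = (if a j i = c then insert j {k. k \<noteq> j \<and> a k i = c} else {k. k \<noteq> j \<and> a k i = c})"
    by auto
  then show "add_vote (scores_minus a j) (a j) i c = card {k. a k i = c}"
    unfolding add_vote_def scores_minus_def by simp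
qed

lemma plurality_add_vote_scores_minus: "plurality (add_vote (scores_minus a j) (a j)) = profile_outcome a"
  by (simp add: add_vote_scores_minus profile_outcome_def)

lemma plurality_add_vote_fun_upd:
  assumes "\<forall>k. k \<noteq> i \<longrightarrow> b k = b' k"
  shows "plurality (add_vote (s(i := v i)) b) = (plurality (add_vote s b'))(i := plurality (add_vote v b) i)"
proof
  fix k
  show "plurality (add_vote (s(i := v i)) b) k = ((plurality (add_vote s b'))(i := plurality (add_vote v b) i)) k"
    using assms by (cases "k = i") (simp_all add: plurality_def add_vote_def)
qed

lemma plurality_add_vote_differ:
  assumes agree: "\<forall>k. k \<noteq> i \<longrightarrow> b k = b' k"
    and differ: "plurality (add_vote v b) \<noteq> plurality (add_vote v b')"
  shows "plurality (add_vote v b) i = b i" "plurality (add_vote v b') i = b' i" "b i \<noteq> b' i"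
proof -
  have "plurality (add_vote v b) i \<noteq> plurality (add_vote v b') i"
  proof
    assume at_i: "plurality (add_vote v b) i = plurality (add_vote v b') i"
    have "plurality (add_vote v b) k = plurality (add_vote v b') k" for k
      using agree at_i by (cases "k = i") (simp_all add: plurality_def add_vote_def)
    then have "plurality (add_vote v b) = plurality (add_vote v b')" ..
    with differ show False ..
  qed
  then show "plurality (add_vote v b) i = b i" "plurality (add_vote v b') i = b' i" "b i \<noteq> b' i"
    unfolding plurality_def add_vote_def by (cases "b i"; cases "b' i"; auto)+
qed

lemma unc_set_fun_upd_scores_minus:
  assumes "monotone_dist dh" "\<forall>k. 0 \<le> r k" "v \<in> unc_set dh a j r"
  shows "(scores_minus a j)(i := v i) \<in> unc_set dh a j r"
  using assms unfolding unc_set_def issue_dist_def monotone_dist_def by auto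

lemma strict_ranking_total_asym:
  assumes "strict_ranking R" "x \<noteq> y" "\<not> R y x"
  shows "R x y"
  using assms unfolding strict_ranking_def by blast

lemma LDI_step_local_improvement:
  assumes dist: "monotone_dist dh" and rank: "strict_ranking R"
    and radii: "\<forall>k. 0 \<le> r k" and step: "LDI_step dh R a j r i b"
  shows "local_improvement R a j i b"
proof -
  let ?S = "unc_set dh a j r" and ?x = "profile_outcome a"
  have dom: "S_dominates R ?S b (a j)" and agree: "\<forall>k. k \<noteq> i \<longrightarrow> b k = a j k"
    using step unfolding LDI_step_def Let_def by auto
  from dom obtain v where "v \<in> ?S"
    and v_beats: "R (plurality (add_vote v b)) (plurality (add_vote v (a j)))"
    unfolding S_dominates_def S_beats_def by auto
  have "plurality (add_vote v b) \<noteq> plurality (add_vote v (a j))"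
    using v_beats rank unfolding strict_ranking_def by metis
  note differ = plurality_add_vote_differ[OF agree this]
  define v' where "v' = (scores_minus a j)(i := v i)"
  have "v' \<in> ?S"
    unfolding v'_def using unc_set_fun_upd_scores_minus[OF dist radii \<open>v \<in> ?S\<close>] .
  moreover have "plurality (add_vote v' b) = ?x(i := b i)"
    using plurality_add_vote_fun_upd[OF agree] differ(1)
    by (simp add: v'_def plurality_add_vote_scores_minus)
  moreover have "plurality (add_vote v' (a j)) = ?x(i := \<not> b i)"
    using plurality_add_vote_fun_upd[of i "a j" "a j"] differ(2,3)
    by (simp add: v'_def plurality_add_vote_scores_minus)
  ultimately have "\<not> R (?x(i := \<not> b i)) (?x(i := b i))"
    using dom unfolding S_dominates_def S_beats_def by metis
  moreover have "?x(i := b i) \<noteq> ?x(i := \<not> b i)"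
    by (metis fun_upd_same)
  ultimately have "R (?x(i := b i)) (?x(i := \<not> b i))"
    by (rule strict_ranking_total_asym[OF rank, rotated])
  with differ(3) agree show ?thesis
    unfolding local_improvement_def by blast
qed

lemma eventually_not_if_potential_decreases:
  fixes \<phi> :: "nat \<Rightarrow> nat"
  assumes mono: "\<And>t. T \<le> t \<Longrightarrow> \<phi> (Suc t) \<le> \<phi> t"
    and decrease: "\<And>t. T \<le> t \<Longrightarrow> Q t \<Longrightarrow> \<phi> (Suc t) < \<phi> t"
  shows "eventually (\<lambda>t. \<not> Q t) sequentially"
proof -
  obtain T' where "T \<le> T'" and least: "\<And>t. T \<le> t \<Longrightarrow> \<phi> T' \<le> \<phi> t"
    using ex_has_least_nat[of "\<lambda>t. T \<le> t" T \<phi>] by auto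
  have bounded: "\<phi> t \<le> \<phi> T'" if "T' \<le> t" for t
    using that
  proof (induction t rule: dec_induct)
    case (step u)
    then show ?case using mono[of u] \<open>T \<le> T'\<close> by simp
  qed simp
  have "\<not> Q t" if "T' \<le> t" for t
    using decrease[of t] bounded[OF that] least[of "Suc t"] \<open>T \<le> T'\<close> that by fastforce
  then show ?thesis
    unfolding eventually_sequentially by blast
qed

lemma legalD:
  assumes "legal os R" "k < length os" "\<forall>m<k. x (os ! m) = y (os ! m)"
  shows "R (x(os ! k := c)) (x(os ! k := d)) \<longleftrightarrow> R (y(os ! k := c)) (y(os ! k := d))"
  using assms unfolding legal_def by blast

lemma strict_ranking_preferred_value:
  assumes "strict_ranking R" "R (x(i := c)) (x(i := \<not> c))"
  shows "c = R (x(i := True)) (x(i := False))"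
  using assms unfolding strict_ranking_def by (cases c) auto

text \<open>In round t, agent J t changes its vote on issue I t, to B t.\<close>
locale improvement_run =
  fixes pref :: "'a::finite \<Rightarrow> 'i outcome \<Rightarrow> 'i outcome \<Rightarrow> bool"
    and os :: "'i list"
    and prof :: "nat \<Rightarrow> 'a \<Rightarrow> 'i outcome"
    and J :: "nat \<Rightarrow> 'a" and I :: "nat \<Rightarrow> 'i" and B :: "nat \<Rightarrow> 'i outcome"
  assumes ranking: "\<And>j. strict_ranking (pref j)"
    and legal: "\<And>j. legal os (pref j)"
    and improves: "\<And>t. local_improvement (pref (J t)) (prof t) (J t) (I t) (B t)"
    and prof_Suc: "\<And>t. prof (Suc t) = (prof t)(J t := B t)"
begin

lemma prof_Suc_other_issue: "q \<noteq> I t \<Longrightarrow> prof (Suc t) j q = prof t j q"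
  using improves[of t] unfolding prof_Suc local_improvement_def by simp

lemma prof_Suc_issue: "prof (Suc t) j (I t) = (if j = J t then B t (I t) else prof t j (I t))"
  by (simp add: prof_Suc)

lemma prof_frozen:
  assumes "\<forall>t\<ge>T. I t \<noteq> q" "T \<le> t"
  shows "prof t j q = prof T j q"
  using assms(2)
proof (induction t rule: dec_induct)
  case (step u)
  then have "I u \<noteq> q"
    using assms(1) by simp
  then show ?case
    using step.IH prof_Suc_other_issue[of q u j] by simp
qed simp

lemma issue_eventually_silent:
  assumes k: "k < length os" and silent: "\<forall>t\<ge>T. \<forall>m<k. I t \<noteq> os ! m"
  shows "eventually (\<lambda>t. I t \<noteq> os ! k) sequentially"
proof -
  define i where "i = os ! k"
  define y where "y = profile_outcome (prof T)"
  define p where "p j = pref j (y(i := True)) (y(i := False))" for j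
  have moves_to_p: "B t i = p (J t)" if t: "T \<le> t" "I t = i" for t
  proof -
    have "\<forall>m<k. profile_outcome (prof t) (os ! m) = y (os ! m)"
    proof (intro allI impI)
      fix m assume "m < k"
      then have "prof t j (os ! m) = prof T j (os ! m)" for j
        using silent t(1) by (intro prof_frozen) auto
      then show "profile_outcome (prof t) (os ! m) = y (os ! m)"
        unfolding y_def by (rule profile_outcome_cong)
    qed
    moreover have "pref (J t) ((profile_outcome (prof t))(i := B t i)) ((profile_outcome (prof t))(i := \<not> B t i))"
      using improves[of t] unfolding local_improvement_def t(2) by blast
    ultimately have "pref (J t) (y(i := B t i)) (y(i := \<not> B t i))"
      unfolding i_def by (blast dest: legalD[OF legal k])
    then show ?thesis
      unfolding p_def by (rule strict_ranking_preferred_value[OF ranking])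
  qed
  have vote_Suc: "prof (Suc t) j i = (if I t = i \<and> j = J t then p j else prof t j i)"
    if "T \<le> t" for t j
  proof (cases "I t = i")
    case True
    then show ?thesis using prof_Suc_issue[of t j] moves_to_p[OF that True] by auto
  next
    case False
    then show ?thesis using prof_Suc_other_issue[of i t j] by simp
  qed
  define \<phi> where "\<phi> t = card {j. prof t j i \<noteq> p j}" for t
  have dissent_Suc: "{j. prof (Suc t) j i \<noteq> p j} \<subseteq> {j. prof t j i \<noteq> p j} - (if I t = i then {J t} else {})"
    if "T \<le> t" for t
    using vote_Suc[OF that] by auto
  show ?thesis
    unfolding i_def[symmetric]
  proof (rule eventually_not_if_potential_decreases)
    show "\<phi> (Suc t) \<le> \<phi> t" if "T \<le> t" for t
      unfolding \<phi>_def using dissent_Suc[OF that] by (intro card_mono) auto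
    show "\<phi> (Suc t) < \<phi> t" if "T \<le> t" "I t = i" for t
    proof -
      have "J t \<in> {j. prof t j i \<noteq> p j}"
        using improves[of t] moves_to_p[OF that] that(2) unfolding local_improvement_def by simp
      then show ?thesis
        unfolding \<phi>_def using dissent_Suc[OF that(1)] that(2) by (intro psubset_card_mono) auto
    qed
  qed
qed

lemma prefix_eventually_silent:
  "k \<le> length os \<Longrightarrow> eventually (\<lambda>t. \<forall>m<k. I t \<noteq> os ! m) sequentially"
proof (induction k)
  case (Suc k)
  then obtain T where "\<forall>t\<ge>T. \<forall>m<k. I t \<noteq> os ! m"
    unfolding eventually_sequentially by auto
  with Suc.prems have "eventually (\<lambda>t. I t \<noteq> os ! k) sequentially"
    by (intro issue_eventually_silent) auto
  with Suc show ?case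
    by (auto elim: eventually_elim2 simp: less_Suc_eq)
qed simp

lemma impossible:
  assumes "issue_order os"
  shows False
proof -
  obtain T where "\<forall>m<length os. I T \<noteq> os ! m"
    using prefix_eventually_silent[of "length os"] unfolding eventually_sequentially by auto
  moreover have "I T \<in> set os"
    using assms unfolding issue_order_def by simp
  ultimately show False
    by (metis in_set_conv_nth)
qed

end

theorem theorem2:
  fixes dh :: "nat \<Rightarrow> nat \<Rightarrow> real"
    and pref :: "'a::finite \<Rightarrow> ('i::finite \<Rightarrow> bool) \<Rightarrow> ('i \<Rightarrow> bool) \<Rightarrow> bool"
    and os :: "'i list"
  assumes "monotone_dist dh"
    and "\<forall>j. strict_ranking (pref j)"
    and "issue_order os"
    and "\<forall>j. legal os (pref j)"
  shows "\<not> (\<exists>prof :: nat \<Rightarrow> ('a \<Rightarrow> 'i \<Rightarrow> bool). \<forall>t. \<exists>j i r b.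
            (\<forall>k. 0 \<le> r k) \<and> LDI_step dh (pref j) (prof t) j r i b \<and>
            prof (Suc t) = (prof t)(j := b))"
proof
  assume "\<exists>prof :: nat \<Rightarrow> ('a \<Rightarrow> 'i \<Rightarrow> bool). \<forall>t. \<exists>j i r b.
            (\<forall>k. 0 \<le> r k) \<and> LDI_step dh (pref j) (prof t) j r i b \<and>
            prof (Suc t) = (prof t)(j := b)"
  then obtain prof :: "nat \<Rightarrow> 'a \<Rightarrow> 'i outcome"
    where "\<forall>t. \<exists>j i b. local_improvement (pref j) (prof t) j i b \<and> prof (Suc t) = (prof t)(j := b)"
    using LDI_step_local_improvement[OF assms(1)] assms(2) by metis
  then obtain J I B where "\<And>t. local_improvement (pref (J t)) (prof t) (J t) (I t) (B t)"
    and "\<And>t. prof (Suc t) = (prof t)(J t := B t)"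
    by metis
  then interpret improvement_run pref os prof J I B
    using assms(2,4) by unfold_locales auto
  show False
    using impossible[OF assms(3)] .
qed

end
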